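(* For every linkage $\mathcal L$, $$\mathrm{NCConf}_0(\mathcal L)=\bigcap_{n=1}^\infty \overline{\mathrm{Annot}_{\mathcal L}(\mathrm{NConf}_{1/n}(\mathcal L))},$$ where the bar denotes topological closure in $(\mathbb R^2)^V\times\mathbb R^{E\times E}$. In particular, replacing $1$ by any $\epsilon>0$ in the definition of $\mathrm{NCConf}_0(\mathcal L)$ gives the same set.
   Context: A linkage is a pair $\mathcal L=(G,\ell)$ with $G=(V,E)$ a finite graph and $\ell:E\to\mathbb R_{\ge0}$ (edges are bars; zero lengths allowed). A configuration is a map $C:V\to\mathbb R^2$ with $|C(v)-C(w)|=\ell(v,w)$ for every bar; $\mathrm{Conf}_0(\mathcal L)$ is the set of configurations. Two linkages $(G_1,\ell_1),(G_2,\ell_2)$ are $\epsilon$-related if $G_1=G_2$ and $|\ell_1(e)-\ell_2(e)|\le\epsilon$ for all $e$. A configuration $C$ of a linkage $\mathcal L'=(G,\ell')$ is nontouching if no two bars intersect except at endpoints, and two vertices have the same position iff they are joined in $G$ by a path of bars of $\ell'$-length zero (such vertices are regarded as merged). $\mathrm{NConf}_\epsilon(\mathcal L)$ is the set of nontouching configurations of linkages $\epsilon$-related to $\mathcal L$. Order function: for oriented segments $e_1,e_2$, in coordinates where $e_1$ runs from $(0,0)$ to $(l,0)$, let $d_\pm(e_1,e_2)=\mathrm{len}\{x\in[0,l]:\exists y,\ \pm y\ge0,\ (x,y)\in e_2\}$ and $\mathrm{Ord}(e_1,e_2)=d_+-d_-$. Edges carry fixed canonical orientations; $\mathrm{Annot}_{\mathcal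 L}(C)=(C,A)$ with $A_{i,j}=\mathrm{Ord}(C(e_i),C(e_j))$. The space of noncrossing configurations is $\mathrm{NCConf}_0(\mathcal L)=\big(\mathrm{Conf}_0(\mathcal L)\times\mathbb R^{E\times E}\big)\cap\overline{\mathrm{Annot}_{\mathcal L}(\mathrm{NConf}_1(\mathcal L))}$, i.e. the set of limits, lying in $\mathrm{Conf}_0(\mathcal L)\times\mathbb R^{E\times E}$, of sequences of annotated nontouching configurations of linkages $1$-related to $\mathcal L$. *)

theory Defs
  imports "HOL-Analysis.Analysis"
begin

text \<open>A linkage: vertices are the elements of a finite type 'v; the bars form a set E
  of canonically oriented pairs (a,b) of distinct vertices (each bar stored once);
  the length function l is only relevant on E.\<close>

definition linkage :: "('v \<times> 'v) set \<Rightarrow> ('v \<times> 'v \<Rightarrow> real) \<Rightarrow> bool" where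
  "linkage E l \<longleftrightarrow> (\<forall>(a,b)\<in>E. a \<noteq> b \<and> (b,a) \<notin> E) \<and> (\<forall>e\<in>E. l e \<ge> 0)"

definition is_config :: "('v \<times> 'v) set \<Rightarrow> ('v \<times> 'v \<Rightarrow> real) \<Rightarrow> ('v \<Rightarrow> real^2) \<Rightarrow> bool" where
  "is_config E l C \<longleftrightarrow> (\<forall>(a,b)\<in>E. dist (C a) (C b) = l (a,b))"

definition eps_related :: "('v \<times> 'v) set \<Rightarrow> ('v \<times> 'v \<Rightarrow> real) \<Rightarrow> ('v \<times> 'v \<Rightarrow> real) \<Rightarrow> real \<Rightarrow> bool" where
  "eps_related E l1 l2 \<epsilon> \<longleftrightarrow> (\<forall>e\<in>E. \<bar>l1 e - l2 e\<bar> \<le> \<epsilon>)"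

definition zero_bars :: "('v \<times> 'v) set \<Rightarrow> ('v \<times> 'v \<Rightarrow> real) \<Rightarrow> ('v \<times> 'v) set" where
  "zero_bars E l = {e \<in> E. l e = 0}"

definition merged :: "('v \<times> 'v) set \<Rightarrow> ('v \<times> 'v \<Rightarrow> real) \<Rightarrow> 'v \<Rightarrow> 'v \<Rightarrow> bool" where
  "merged E l u v \<longleftrightarrow> (u, v) \<in> (zero_bars E l \<union> (zero_bars E l)\<inverse>)\<^sup>*"

definition bar :: "('v \<Rightarrow> real^2) \<Rightarrow> 'v \<times> 'v \<Rightarrow> (real^2) set" where
  "bar C e = closed_segment (C (fst e)) (C (snd e))"

definition nontouching :: "('v \<times> 'v) set \<Rightarrow> ('v \<times> 'v \<Rightarrow> real) \<Rightarrow> ('v \<Rightarrow> real^2) \<Rightarrow> bool" where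
  "nontouching E l C \<longleftrightarrow> is_config E l C
     \<and> (\<forall>e\<in>E. \<forall>f\<in>E. e \<noteq> f \<longrightarrow>
          bar C e \<inter> bar C f \<subseteq> {C (fst e), C (snd e)} \<inter> {C (fst f), C (snd f)})
     \<and> (\<forall>u v. C u = C v \<longleftrightarrow> merged E l u v)"

definition NConf :: "('v \<times> 'v) set \<Rightarrow> ('v \<times> 'v \<Rightarrow> real) \<Rightarrow> real \<Rightarrow> ('v \<Rightarrow> real^2) set" where
  "NConf E l \<epsilon> = {C. \<exists>l'. (\<forall>e\<in>E. l' e \<ge> 0) \<and> eps_related E l l' \<epsilon> \<and> nontouching E l' C}"

definition rot90 :: "real^2 \<Rightarrow> real^2" where
  "rot90 u = (\<chi> i. if i = 1 then - (u $ 2) else u $ 1)"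

text \<open>d_s(e1,e2) for s = 1 (d_+) and s = -1 (d_-), with e1 from p to q and e2 the
  segment from a to b; coordinates: x = (z-p).u, y = (z-p).rot90 u, u = sgn(q-p).\<close>
definition d_side :: "real \<Rightarrow> real^2 \<Rightarrow> real^2 \<Rightarrow> real^2 \<Rightarrow> real^2 \<Rightarrow> real" where
  "d_side s p q a b =
     measure lebesgue {x \<in> {0 .. dist p q}. \<exists>z \<in> closed_segment a b.
        x = (z - p) \<bullet> sgn (q - p) \<and> s * ((z - p) \<bullet> rot90 (sgn (q - p))) \<ge> 0}"

definition Ord :: "real^2 \<Rightarrow> real^2 \<Rightarrow> real^2 \<Rightarrow> real^2 \<Rightarrow> real" where
  "Ord p q a b = d_side 1 p q a b - d_side (-1) p q a b"

text \<open>R^(E x E) is represented by functions vanishing outside E x E.\<close>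
definition Annot :: "('v \<times> 'v) set \<Rightarrow> ('v \<Rightarrow> real^2)
    \<Rightarrow> ('v \<Rightarrow> real^2) \<times> ('v \<times> 'v \<Rightarrow> 'v \<times> 'v \<Rightarrow> real)" where
  "Annot E C = (C, \<lambda>i j. if i \<in> E \<and> j \<in> E
       then Ord (C (fst i)) (C (snd i)) (C (fst j)) (C (snd j)) else 0)"

definition NCConf0 :: "('v \<times> 'v) set \<Rightarrow> ('v \<times> 'v \<Rightarrow> real)
    \<Rightarrow> (('v \<Rightarrow> real^2) \<times> ('v \<times> 'v \<Rightarrow> 'v \<times> 'v \<Rightarrow> real)) set" where
  "NCConf0 E l = ({C. is_config E l C} \<times> UNIV) \<inter> closure (Annot E ` NConf E l 1)"

end

theory Submission
  imports Defs
begin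

(* The tolerance \<epsilon> in NConf E l \<epsilon> only constrains how far the actual bar
   lengths of a configuration C deviate from l; the nontouching condition refers to the
   perturbed lengths l', and these are determined by C itself on the bars.  Hence a
   configuration in NConf E l \<epsilon> whose bar errors are at most \<delta> already lies in
   NConf E l \<delta>.  Bar errors depend continuously on the annotated configuration, so
   (1) every point of the closure of Annot E ` NConf E l \<epsilon> has bar errors \<le> \<epsilon>, and
   (2) near a genuine configuration of l (all bar errors 0) the \<epsilon>-set and the \<delta>-set
       agree on an open neighbourhood, so such a point in the \<epsilon>-closure is also in the
       \<delta>-closure, for every \<delta> > 0.
   From (2), NCConf0 can be defined with any tolerance \<epsilon> > 0 in place of 1; from (1),
   a point in every (1/n)-closure has bar errors 0, i.e. is a configuration of l, which
   gives the intersection formula. *)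

definition bar_error :: "'v \<times> 'v \<Rightarrow> real \<Rightarrow> ('v \<Rightarrow> real^2) \<Rightarrow> real" where
  "bar_error e c C = \<bar>dist (C (fst e)) (C (snd e)) - c\<bar>"

lemma is_config_iff_bar_error:
  "is_config E l C \<longleftrightarrow> (\<forall>e\<in>E. bar_error e (l e) C = 0)"
  unfolding is_config_def bar_error_def by auto

lemma continuous_bar_error:
  "continuous_on UNIV (\<lambda>x::('v \<Rightarrow> real^2) \<times> 'b::topological_space. bar_error e c (fst x))"
proof -
  have coord: "continuous_on UNIV (\<lambda>x::('v \<Rightarrow> real^2) \<times> 'b. fst x a)" for a
  proof -
    have "continuous_on UNIV ((\<lambda>C::'v \<Rightarrow> real^2. C a) \<circ> fst)"
      by (rule continuous_on_compose) (auto intro: continuous_intros)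
    then show ?thesis by (simp add: o_def)
  qed
  show ?thesis unfolding bar_error_def by (intro continuous_intros coord)
qed

lemma nontouching_bar_length:
  assumes "nontouching E l' C" "e \<in> E"
  shows "dist (C (fst e)) (C (snd e)) = l' e"
  using assms unfolding nontouching_def is_config_def by (cases e) auto

lemma NConf_bar_error:
  assumes "C \<in> NConf E l \<epsilon>" "e \<in> E"
  shows "bar_error e (l e) C \<le> \<epsilon>"
proof -
  from assms(1) obtain l' where "eps_related E l l' \<epsilon>" "nontouching E l' C"
    unfolding NConf_def by blast
  with assms(2) show ?thesis
    using nontouching_bar_length unfolding eps_related_def bar_error_def by fastforce
qed

lemma NConf_tighten:
  assumes "C \<in> NConf E l \<epsilon>" "\<forall>e\<in>E. bar_error e (l e) C \<le> \<delta>"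
  shows "C \<in> NConf E l \<delta>"
proof -
  from assms(1) obtain l' where l': "\<forall>e\<in>E. l' e \<ge> 0" "nontouching E l' C"
    unfolding NConf_def by blast
  have "eps_related E l l' \<delta>"
    using assms(2) nontouching_bar_length[OF l'(2)]
    unfolding eps_related_def bar_error_def by fastforce
  with l' show ?thesis unfolding NConf_def by blast
qed

lemma closure_NConf_bar_error:
  assumes "x \<in> closure (Annot E ` NConf E l \<epsilon>)" "e \<in> E"
  shows "bar_error e (l e) (fst x) \<le> \<epsilon>"
proof -
  let ?S = "{y. bar_error e (l e) (fst y) \<le> \<epsilon>}"
  have "closed ?S"
    by (intro closed_Collect_le continuous_bar_error continuous_on_const)
  moreover have "Annot E ` NConf E l \<epsilon> \<subseteq> ?S"
    using NConf_bar_error[OF _ assms(2)] by (auto simp: Annot_def)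
  ultimately have "closure (Annot E ` NConf E l \<epsilon>) \<subseteq> ?S"
    by (rule closure_minimal[rotated])
  with assms(1) show ?thesis by auto
qed

lemma closure_local_subset:
  assumes "x \<in> closure A" "open U" "x \<in> U" "U \<inter> A \<subseteq> B"
  shows "x \<in> closure B"
proof -
  have "x \<in> U \<inter> closure A" using assms(1,3) by blast
  also have "\<dots> \<subseteq> closure (U \<inter> A)" by (rule open_Int_closure_subset[OF assms(2)])
  also have "\<dots> \<subseteq> closure B" by (rule closure_mono[OF assms(4)])
  finally show ?thesis .
qed

lemma closure_NConf_tighten:
  assumes "finite E" "x \<in> closure (Annot E ` NConf E l \<epsilon>)" "is_config E l (fst x)" "\<delta> > 0"
  shows "x \<in> closure (Annot E ` NConf E l \<delta>)"
proof (rule closure_local_subset[OF assms(2)])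
  let ?U = "\<Inter>e\<in>E. {y. bar_error e (l e) (fst y) < \<delta>}"
  show "open ?U"
    by (intro open_INT assms(1) ballI open_Collect_less continuous_bar_error
        continuous_on_const)
  show "x \<in> ?U" using assms(3,4) by (simp add: is_config_iff_bar_error)
  show "?U \<inter> Annot E ` NConf E l \<epsilon> \<subseteq> Annot E ` NConf E l \<delta>"
    using NConf_tighten[where \<delta> = \<delta>] by (force simp: Annot_def)
qed

lemma closure_NConf_all_config:
  assumes "\<forall>n\<in>{1::nat..}. x \<in> closure (Annot E ` NConf E l (1 / real n))"
  shows "is_config E l (fst x)"
  unfolding is_config_iff_bar_error
proof
  fix e assume e: "e \<in> E"
  let ?d = "bar_error e (l e) (fst x)"
  have small: "?d \<le> inverse (real (Suc n))" for n
  proof -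
    have "x \<in> closure (Annot E ` NConf E l (1 / real (Suc n)))"
      using assms by (metis atLeast_iff le_add1 plus_1_eq_Suc)
    from closure_NConf_bar_error[OF this e] show ?thesis by (simp add: inverse_eq_divide)
  qed
  show "?d = 0"
  proof (rule ccontr)
    assume "?d \<noteq> 0"
    then have "?d > 0" by (simp add: bar_error_def)
    then obtain n where "inverse (real (Suc n)) < ?d" using reals_Archimedean by blast
    with small[of n] show False by simp
  qed
qed

lemma mem_NCConf0_iff:
  "x \<in> NCConf0 E l \<longleftrightarrow> is_config E l (fst x) \<and> x \<in> closure (Annot E ` NConf E l 1)"
  unfolding NCConf0_def by (simp add: mem_Times_iff)

lemma NCConf0_any_tolerance:
  assumes "finite E" "\<epsilon> > 0"
  shows "({C. is_config E l C} \<times> UNIV) \<inter> closure (Annot E ` NConf E l \<epsilon>) = NCConf0 E l"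
proof (rule set_eqI)
  fix x
  have "is_config E l (fst x) \<Longrightarrow> x \<in> closure (Annot E ` NConf E l \<epsilon>)
          \<longleftrightarrow> x \<in> closure (Annot E ` NConf E l 1)"
    using closure_NConf_tighten[OF assms(1)] assms(2) by (meson zero_less_one)
  then show "x \<in> ({C. is_config E l C} \<times> UNIV) \<inter> closure (Annot E ` NConf E l \<epsilon>)
      \<longleftrightarrow> x \<in> NCConf0 E l"
    by (auto simp: mem_NCConf0_iff mem_Times_iff)
qed

theorem mainTheorem3:
  fixes E :: "('v::finite \<times> 'v) set" and l :: "'v \<times> 'v \<Rightarrow> real"
  assumes "linkage E l"
  shows "NCConf0 E l = (\<Inter>n\<in>{1::nat..}. closure (Annot E ` NConf E l (1 / real n)))
    \<and> (\<forall>\<epsilon>>0. ({C. is_config E l C} \<times> UNIV) \<inter> closure (Annot E ` NConf E l \<epsilon>) = NCConf0 E l)"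
proof
  have fin: "finite E" by simp
  show "NCConf0 E l = (\<Inter>n\<in>{1::nat..}. closure (Annot E ` NConf E l (1 / real n)))"
  proof (rule set_eqI)
    fix x
    have "x \<in> NCConf0 E l \<Longrightarrow> x \<in> closure (Annot E ` NConf E l (1 / real n))"
      if "n \<ge> 1" for n
      using closure_NConf_tighten[OF fin, of x l 1 "1 / real n"] that
      by (simp add: mem_NCConf0_iff)
    moreover have "x \<in> NCConf0 E l"
      if all: "\<forall>n\<in>{1::nat..}. x \<in> closure (Annot E ` NConf E l (1 / real n))"
    proof -
      have "x \<in> closure (Annot E ` NConf E l (1 / real (1::nat)))" using all by blast
      then show ?thesis using closure_NConf_all_config[OF all] by (simp add: mem_NCConf0_iff)
    qed
    ultimately show "x \<in> NCConf0 E l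
        \<longleftrightarrow> x \<in> (\<Inter>n\<in>{1::nat..}. closure (Annot E ` NConf E l (1 / real n)))"
      by blast
  qed
  show "\<forall>\<epsilon>>0. ({C. is_config E l C} \<times> UNIV) \<inter> closure (Annot E ` NConf E l \<epsilon>) = NCConf0 E l"
    using NCConf0_any_tolerance[OF fin] by blast
qed

end
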